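(* Let $q$ be a query and run the Neighboring Graph Defects Fixing procedure (described in the context) for $q$ on a graph index $G=(V,E,E_{EX})$ with parameters $N_q$, $K_h\ge N_q$ and $M_{EX}$. Then the procedure inserts at most $2(N_q-1)$ extra directed edges into $E_{EX}$.
   Context: Setting: $X\subseteq\mathbb{R}^d$ finite base set, $\delta$ a symmetric distance, $N_{i,q}$ the $i$-th nearest neighbour of $q$ in $X$, $F_{x,q}$ the rank of $x\in X$ as a neighbour of $q$. A graph index is $G=(V,E,E_{EX})$ with vertex set $X$, base directed edges $E$ and extra directed edges $E_{EX}$, each extra edge stored as a triple $(u,v,h)$ with a weight $h$; paths use edges of $E\cup E_{EX}$. Escape Hardness: $EH(u,v,q,G)=\min_{p}\max_{x\in p}F_{x,q}$ over directed paths $p$ from $u$ to $v$ ($+\infty$ if none); $\mathbb{H}_{i,j}=EH(N_{i,q},N_{j,q},q,G)$ for $1\le i,j\le N_q$. The $K_h$-reachable matrix $\mathbb{T}\in\{0,1\}^{N_q\times N_q}$ has $\mathbb{T}_{i,j}=1$ iff $\mathbb{H}_{i,j}\le K_h$. For a vertex $u$, $ExtraNeighbors(u)$ is the set of $v$ with $(u,v,h)\in E_{EX}$ for some $h$. Procedure (with $\mathbb{H},\mathbb{T}$ computed on the input graph): let $EC$ be the set of pairs $(i,j)$, $1\le i,j\le N_q$, with $\mathbb{T}_{i,j}=0$, sorted in ascending order of $\delta(N_{i,q},N_{j,q})$. While $EC\ne\emptyset$: pop the first pair $(s,t)$; if $\mathbb{T}_{s,t}\ne0$, continue to the next pair; otherwise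 set $\mathbb{T}_{s,t}\leftarrow1$; if $|ExtraNeighbors(N_{s,q})|<M_{EX}$, insert $(N_{s,q},N_{t,q},\mathbb{H}_{s,t})$ into $E_{EX}$; else choose $(N_{s,q},v,h)\in E_{EX}$ with minimum $h$ and, if $h<\mathbb{H}_{s,t}$, remove it from $E_{EX}$ and insert $(N_{s,q},N_{t,q},\mathbb{H}_{s,t})$; then for all $1\le i,j\le N_q$ set $\mathbb{T}_{i,j}\leftarrow\mathbb{T}_{i,j}\lor(\mathbb{T}_{i,s}\land\mathbb{T}_{t,j})$. Return the resulting graph. *)

theory Defs
  imports "HOL-Analysis.Analysis" "HOL-Library.Extended_Nat"
begin

type_synonym 'd point = "real ^ 'd"

definition rank :: "(nat \<Rightarrow> 'p) \<Rightarrow> 'p set \<Rightarrow> 'p \<Rightarrow> nat" where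
  "rank N X x = the_inv_into {1..card X} N x"

definition nn_enum :: "('p \<Rightarrow> 'p \<Rightarrow> real) \<Rightarrow> 'p set \<Rightarrow> 'p \<Rightarrow> (nat \<Rightarrow> 'p) \<Rightarrow> bool" where
  "nn_enum \<delta> X q N \<longleftrightarrow> bij_betw N {1..card X} X \<and>
     (\<forall>i j. 1 \<le> i \<longrightarrow> i \<le> j \<longrightarrow> j \<le> card X \<longrightarrow> \<delta> q (N i) \<le> \<delta> q (N j))"

definition all_edges :: "('p \<times> 'p) set \<Rightarrow> ('p \<times> 'p \<times> enat) set \<Rightarrow> ('p \<times> 'p) set" where
  "all_edges E EEX = E \<union> {(u, v). \<exists>h. (u, v, h) \<in> EEX}"

definition gpath :: "('p \<times> 'p) set \<Rightarrow> 'p list \<Rightarrow> bool" where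
  "gpath A p \<longleftrightarrow> p \<noteq> [] \<and> (\<forall>k. Suc k < length p \<longrightarrow> (p ! k, p ! Suc k) \<in> A)"

text \<open>Escape hardness EH(u,v,q,G); the infimum of the empty set in enat is \<infinity>.\<close>
definition EH :: "('p \<Rightarrow> nat) \<Rightarrow> ('p \<times> 'p) set \<Rightarrow> ('p \<times> 'p \<times> enat) set \<Rightarrow> 'p \<Rightarrow> 'p \<Rightarrow> enat" where
  "EH F E EEX u v =
     (INF p \<in> {p. gpath (all_edges E EEX) p \<and> hd p = u \<and> last p = v}. enat (Max (F ` set p)))"

definition ExtraNeighbors :: "('p \<times> 'p \<times> enat) set \<Rightarrow> 'p \<Rightarrow> 'p set" where
  "ExtraNeighbors EEX u = {v. \<exists>h. (u, v, h) \<in> EEX}"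

definition T_update :: "(nat \<Rightarrow> nat \<Rightarrow> bool) \<Rightarrow> nat \<Rightarrow> nat \<Rightarrow> (nat \<Rightarrow> nat \<Rightarrow> bool)" where
  "T_update T s t = (let T' = T(s := (T s)(t := True)) in (\<lambda>i j. T' i j \<or> (T' i s \<and> T' t j)))"

text \<open>State: (reachable matrix, extra edge set, number of insertions performed).
  Parameters: neighbour enumeration N, the fixed matrix H (computed on the input graph), M_EX.
  The choice of a minimum-weight extra edge is nondeterministic.\<close>
inductive ngdf_run ::
  "(nat \<Rightarrow> 'p) \<Rightarrow> (nat \<Rightarrow> nat \<Rightarrow> enat) \<Rightarrow> nat \<Rightarrow> (nat \<times> nat) list \<Rightarrow>
   (nat \<Rightarrow> nat \<Rightarrow> bool) \<times> ('p \<times> 'p \<times> enat) set \<times> nat \<Rightarrow>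
   (nat \<Rightarrow> nat \<Rightarrow> bool) \<times> ('p \<times> 'p \<times> enat) set \<times> nat \<Rightarrow> bool"
  for N H M where
  run_nil: "ngdf_run N H M [] st st"
| run_skip: "T s t \<Longrightarrow> ngdf_run N H M ps (T, EEX, c) st' \<Longrightarrow> ngdf_run N H M ((s, t) # ps) (T, EEX, c) st'"
| run_ins: "\<not> T s t \<Longrightarrow> card (ExtraNeighbors EEX (N s)) < M \<Longrightarrow>
        ngdf_run N H M ps (T_update T s t, insert (N s, N t, H s t) EEX, Suc c) st' \<Longrightarrow>
        ngdf_run N H M ((s, t) # ps) (T, EEX, c) st'"
| run_repl: "\<not> T s t \<Longrightarrow> \<not> card (ExtraNeighbors EEX (N s)) < M \<Longrightarrow>
        (N s, v, h) \<in> EEX \<Longrightarrow> (\<forall>v' h'. (N s, v', h') \<in> EEX \<longrightarrow> h \<le> h') \<Longrightarrow> h < H s t \<Longrightarrow>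
        ngdf_run N H M ps (T_update T s t, insert (N s, N t, H s t) (EEX - {(N s, v, h)}), Suc c) st' \<Longrightarrow>
        ngdf_run N H M ((s, t) # ps) (T, EEX, c) st'"
| run_keep: "\<not> T s t \<Longrightarrow> \<not> card (ExtraNeighbors EEX (N s)) < M \<Longrightarrow>
        (\<forall>v h. (N s, v, h) \<in> EEX \<longrightarrow> \<not> h < H s t) \<Longrightarrow>
        ngdf_run N H M ps (T_update T s t, EEX, c) st' \<Longrightarrow>
        ngdf_run N H M ((s, t) # ps) (T, EEX, c) st'"

text \<open>Order on candidate pairs: ascending in \<delta>(N_i,N_j); ties broken by the unordered pair
  (min, max) lexicographically, so a pair and its reverse are adjacent.\<close>
definition ec_le :: "('p \<Rightarrow> 'p \<Rightarrow> real) \<Rightarrow> (nat \<Rightarrow> 'p) \<Rightarrow> nat \<times> nat \<Rightarrow> nat \<times> nat \<Rightarrow> bool" where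
  "ec_le \<delta> N a b = (case a of (i, j) \<Rightarrow> case b of (k, l) \<Rightarrow>
     \<delta> (N i) (N j) < \<delta> (N k) (N l) \<or>
     (\<delta> (N i) (N j) = \<delta> (N k) (N l) \<and>
       (min i j < min k l \<or> (min i j = min k l \<and> max i j \<le> max k l))))"

end

theory Submission
  imports Defs
begin

text \<open>On the indices \<open>D = {1..N\<^sub>q}\<close> the reachable matrix is a preorder: initially because
  escape paths can be concatenated, afterwards because every update is a closure step. Count its
  classes of mutually reachable indices. An insertion for the pair \<open>(s, t)\<close> merges the classes
  of \<open>s\<close> and \<open>t\<close> if \<open>t\<close> already reaches \<open>s\<close>. Otherwise \<open>(t, s)\<close> is still a candidate, and
  since \<open>\<delta>\<close> is symmetric and ties are broken by the unordered pair, it is the very next one; its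
  insertion then merges the two classes. Hence \<open>c + 2 \<cdot> #classes\<close> never increases; it starts
  at most \<open>2 N\<^sub>q\<close> and ends at least \<open>c + 2\<close>.\<close>

definition mutual_reach :: "'a set \<Rightarrow> ('a \<Rightarrow> 'a \<Rightarrow> bool) \<Rightarrow> 'a rel" where
  "mutual_reach A T = {(x, y) \<in> A \<times> A. T x y \<and> T y x}"

lemma equiv_mutual_reach:
  assumes "reflp_on A T" and "transp_on A T"
  shows "equiv A (mutual_reach A T)"
  using assms unfolding equiv_def refl_on_def sym_def trans_def reflp_on_def transp_on_def
    mutual_reach_def by blast

lemma card_quotient_le: "finite A \<Longrightarrow> card (A // r) \<le> card A"
  unfolding quotient_def UNION_singleton_eq_range by (rule card_image_le)

lemma card_quotient_pos: "finite A \<Longrightarrow> A \<noteq> {} \<Longrightarrow> 0 < card (A // r)"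
  unfolding quotient_def by (simp add: card_gt_0_iff)

lemma card_quotient_less_if_refines:
  assumes "finite A" and R: "equiv A R" and S: "equiv A S" and "R \<subseteq> S"
    and "(x, y) \<in> S" and "(x, y) \<notin> R"
  shows "card (A // S) < card (A // R)"
proof -
  let ?f = "\<lambda>X. S `` X"
  have xy: "x \<in> A" "y \<in> A" using \<open>(x, y) \<in> S\<close> S by (auto simp: equiv_def)
  have "R `` {x} \<noteq> R `` {y}" using \<open>(x, y) \<notin> R\<close> R xy by (simp add: eq_equiv_class_iff)
  moreover have "?f (R `` {x}) = ?f (R `` {y})"
    using \<open>(x, y) \<in> S\<close> refines_equiv_class_eq2[OF \<open>R \<subseteq> S\<close> R S] S
    by (metis equiv_class_eq)
  ultimately have "\<not> inj_on ?f (A // R)" using xy by (meson inj_onD quotientI)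
  moreover have "finite (A // R)" using \<open>finite A\<close> R by (simp add: equiv_def finite_quotient)
  ultimately have "card (?f ` (A // R)) < card (A // R)"
    using card_image_le inj_on_iff_eq_card le_neq_implies_less by metis
  then show ?thesis using refines_equiv_image_eq[OF \<open>R \<subseteq> S\<close> R S] by simp
qed

lemma card_mutual_reach_quotient_le:
  assumes "finite A" and "reflp_on A T" and "transp_on A T" and "transp_on A T'"
    and "\<And>x y. T x y \<Longrightarrow> T' x y"
  shows "card (A // mutual_reach A T') \<le> card (A // mutual_reach A T)"
proof (rule finite_refines_card_le)
  show "equiv A (mutual_reach A T)" using assms(2,3) by (rule equiv_mutual_reach)
  then show "finite (A // mutual_reach A T)" using \<open>finite A\<close> by (simp add: equiv_def finite_quotient)
  have "reflp_on A T'" using assms(2,5) by (simp add: reflp_on_def)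
  then show "equiv A (mutual_reach A T')" using \<open>transp_on A T'\<close> by (rule equiv_mutual_reach)
  show "mutual_reach A T \<subseteq> mutual_reach A T'" using assms(5) by (auto simp: mutual_reach_def)
qed

lemma card_mutual_reach_quotient_less:
  assumes "finite A" and "reflp_on A T" and "transp_on A T" and "transp_on A T'"
    and T'_ge: "\<And>x y. T x y \<Longrightarrow> T' x y"
    and "s \<in> A" and "t \<in> A" and "T' s t" and "T' t s" and "\<not> (T s t \<and> T t s)"
  shows "card (A // mutual_reach A T') < card (A // mutual_reach A T)"
proof (rule card_quotient_less_if_refines)
  have "reflp_on A T'" using \<open>reflp_on A T\<close> T'_ge by (simp add: reflp_on_def)
  then show "equiv A (mutual_reach A T')" using \<open>transp_on A T'\<close> by (rule equiv_mutual_reach)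
  show "equiv A (mutual_reach A T)" using assms(2,3) by (rule equiv_mutual_reach)
  show "mutual_reach A T \<subseteq> mutual_reach A T'" using T'_ge by (auto simp: mutual_reach_def)
  show "(s, t) \<in> mutual_reach A T'" "(s, t) \<notin> mutual_reach A T"
    using assms(6-10) by (auto simp: mutual_reach_def)
qed (fact \<open>finite A\<close>)

lemma T_update_mono: "T i j \<Longrightarrow> T_update T s t i j"
  unfolding T_update_def Let_def by auto

lemma T_update_new_edge: "T_update T s t s t"
  unfolding T_update_def Let_def by auto

lemma T_update_eq:
  assumes "reflp_on A T" and "s \<in> A" and "t \<in> A" and "i \<in> A" and "j \<in> A"
  shows "T_update T s t i j \<longleftrightarrow> T i j \<or> (T i s \<and> T t j)"
  using assms unfolding T_update_def Let_def reflp_on_def by auto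

lemma T_update_reverse_iff:
  assumes "reflp_on A T" and "s \<in> A" and "t \<in> A"
  shows "T_update T s t t s \<longleftrightarrow> T t s"
  using T_update_eq[OF assms assms(3,2)] by blast

lemma reflp_on_T_update: "reflp_on A T \<Longrightarrow> reflp_on A (T_update T s t)"
  by (simp add: reflp_on_def T_update_mono)

lemma transp_on_T_update:
  assumes refl: "reflp_on A T" and trans: "transp_on A T" and "s \<in> A" and "t \<in> A"
  shows "transp_on A (T_update T s t)"
proof (rule transp_onI)
  fix i j k assume ijk: "i \<in> A" "j \<in> A" "k \<in> A"
    and "T_update T s t i j" and "T_update T s t j k"
  then have "T i j \<or> (T i s \<and> T t j)" and "T j k \<or> (T j s \<and> T t k)"
    using T_update_eq[OF refl \<open>s \<in> A\<close> \<open>t \<in> A\<close>] by blast+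
  then have "T i k \<or> (T i s \<and> T t k)"
    using transp_onD[OF trans] ijk \<open>s \<in> A\<close> \<open>t \<in> A\<close> by metis
  then show "T_update T s t i k"
    using T_update_eq[OF refl \<open>s \<in> A\<close> \<open>t \<in> A\<close> ijk(1,3)] by blast
qed

lemma sorted_ec_le_reverse_next:
  assumes sym: "\<And>x y. \<delta> x y = \<delta> y x"
    and sorted: "sorted_wrt (ec_le \<delta> N) ((s, t) # x # ps)"
    and "distinct ((s, t) # x # ps)" and "(t, s) \<in> set (x # ps)"
  shows "x = (t, s)"
proof (rule ccontr)
  assume "x \<noteq> (t, s)"
  then have "(t, s) \<in> set ps" using \<open>(t, s) \<in> set (x # ps)\<close> by simp
  then have "ec_le \<delta> N (s, t) x" and "ec_le \<delta> N x (t, s)" using sorted by auto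
  moreover obtain i j where x: "x = (i, j)" by fastforce
  moreover have "\<delta> (N t) (N s) = \<delta> (N s) (N t)" "min t s = min s t" "max t s = max s t"
    by (simp_all add: sym min.commute max.commute)
  ultimately have "min i j = min s t \<and> max i j = max s t"
    unfolding ec_le_def by (simp only: prod.case) linarith
  then have "x = (s, t) \<or> x = (t, s)" unfolding x by (auto simp: min_def max_def split: if_splits)
  then show False using \<open>x \<noteq> (t, s)\<close> \<open>distinct ((s, t) # x # ps)\<close> by auto
qed

definition ngdf_inv ::
  "('p \<Rightarrow> 'p \<Rightarrow> real) \<Rightarrow> (nat \<Rightarrow> 'p) \<Rightarrow> nat set \<Rightarrow> (nat \<Rightarrow> nat \<Rightarrow> bool) \<Rightarrow> (nat \<times> nat) list \<Rightarrow> bool"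
where
  "ngdf_inv \<delta> N D T ps \<longleftrightarrow> reflp_on D T \<and> transp_on D T \<and> set ps \<subseteq> D \<times> D \<and> distinct ps \<and>
     sorted_wrt (ec_le \<delta> N) ps \<and> (\<forall>i\<in>D. \<forall>j\<in>D. \<not> T i j \<longrightarrow> (i, j) \<in> set ps)"

lemma ngdf_inv_skip: "ngdf_inv \<delta> N D T ((s, t) # ps) \<Longrightarrow> T s t \<Longrightarrow> ngdf_inv \<delta> N D T ps"
  unfolding ngdf_inv_def by auto

lemma ngdf_inv_update:
  assumes inv: "ngdf_inv \<delta> N D T ((s, t) # ps)"
  shows "ngdf_inv \<delta> N D (T_update T s t) ps"
  unfolding ngdf_inv_def
proof (intro conjI ballI impI)
  have "s \<in> D" "t \<in> D" "reflp_on D T" "transp_on D T" using inv by (auto simp: ngdf_inv_def)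
  then show "reflp_on D (T_update T s t)" "transp_on D (T_update T s t)"
    by (simp_all add: reflp_on_T_update transp_on_T_update)
  show "set ps \<subseteq> D \<times> D" "distinct ps" "sorted_wrt (ec_le \<delta> N) ps"
    using inv by (auto simp: ngdf_inv_def)
  fix i j assume ij: "i \<in> D" "j \<in> D" "\<not> T_update T s t i j"
  then have "(i, j) \<in> set ((s, t) # ps)"
    using inv T_update_mono unfolding ngdf_inv_def by blast
  moreover have "(i, j) \<noteq> (s, t)" using ij(3) T_update_new_edge by blast
  ultimately show "(i, j) \<in> set ps" by auto
qed

lemma ngdf_inv_reverse_next:
  assumes "\<And>x y. \<delta> x y = \<delta> y x" and inv: "ngdf_inv \<delta> N D T ((s, t) # ps)"
    and "\<not> T s t" and "\<not> T t s"
  obtains ps' where "ps = (t, s) # ps'"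
proof -
  have "s \<in> D" "t \<in> D" using inv by (auto simp: ngdf_inv_def)
  moreover have "s \<noteq> t" using inv \<open>\<not> T s t\<close> \<open>s \<in> D\<close> by (auto simp: ngdf_inv_def reflp_on_def)
  ultimately have "(t, s) \<in> set ps" using inv \<open>\<not> T t s\<close> unfolding ngdf_inv_def by auto
  then obtain x ps' where ps: "ps = x # ps'" by (cases ps) auto
  have "sorted_wrt (ec_le \<delta> N) ((s, t) # x # ps')" "distinct ((s, t) # x # ps')"
    using inv unfolding ngdf_inv_def ps by simp_all
  then have "x = (t, s)"
    using sorted_ec_le_reverse_next[of \<delta>, OF assms(1)] \<open>(t, s) \<in> set ps\<close> ps by blast
  then show thesis using that ps by blast
qed

lemma ngdf_run_Cons_cases:
  assumes "ngdf_run N H M ((s, t) # ps) (T, EEX, c) st'"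
  shows "(T s t \<and> ngdf_run N H M ps (T, EEX, c) st') \<or>
    (\<not> T s t \<and> (\<exists>EEX' c'. c' \<le> Suc c \<and> ngdf_run N H M ps (T_update T s t, EEX', c') st'))"
  using assms by (cases rule: ngdf_run.cases) fastforce+

definition reverse_pending :: "(nat \<Rightarrow> nat \<Rightarrow> bool) \<Rightarrow> (nat \<times> nat) list \<Rightarrow> bool" where
  "reverse_pending T ps \<longleftrightarrow> (\<exists>s t ps'. ps = (t, s) # ps' \<and> T s t \<and> \<not> T t s)"

text \<open>A non-merging insertion raises \<open>c\<close> without lowering the class count; the
  \<open>reverse_pending\<close> term is the unit of credit paid back by the next insertion, of the reverse
  pair, which does merge.\<close>

lemma ngdf_run_potential_mono:
  assumes sym: "\<And>x y. \<delta> x y = \<delta> y x" and "finite D"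
  shows "ngdf_run N H M ps (T, EEX, c0) (Tf, EEXf, c) \<Longrightarrow> ngdf_inv \<delta> N D T ps \<Longrightarrow>
    c + 2 * card (D // mutual_reach D Tf) + of_bool (reverse_pending T ps)
      \<le> c0 + 2 * card (D // mutual_reach D T)"
proof (induction ps arbitrary: T EEX c0)
  case Nil
  then show ?case by (auto elim: ngdf_run.cases simp: reverse_pending_def)
next
  case (Cons p ps)
  let ?K = "\<lambda>T. card (D // mutual_reach D T)"
  obtain s t where p: "p = (s, t)" by fastforce
  have inv: "ngdf_inv \<delta> N D T ((s, t) # ps)" using Cons.prems(2) p by simp
  then have D: "s \<in> D" "t \<in> D" "reflp_on D T" "transp_on D T" by (auto simp: ngdf_inv_def)
  consider "T s t" "ngdf_run N H M ps (T, EEX, c0) (Tf, EEXf, c)"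
    | EEX' c1 where "\<not> T s t" "c1 \<le> Suc c0"
        "ngdf_run N H M ps (T_update T s t, EEX', c1) (Tf, EEXf, c)"
    using ngdf_run_Cons_cases Cons.prems(1) p by metis
  then show ?case
  proof cases
    case 1
    then show ?thesis using Cons.IH ngdf_inv_skip[OF inv] p by (fastforce simp: reverse_pending_def)
  next
    case (2 EEX' c1)
    let ?U = "T_update T s t"
    have inv_U: "ngdf_inv \<delta> N D ?U ps" using inv by (rule ngdf_inv_update)
    then have IH: "c + 2 * ?K Tf + of_bool (reverse_pending ?U ps) \<le> c1 + 2 * ?K ?U"
      using Cons.IH 2(3) by blast
    have "transp_on D ?U" using inv_U by (simp add: ngdf_inv_def)
    show ?thesis
    proof (cases "T t s")
      case True
      then have "?K ?U < ?K T"
        using card_mutual_reach_quotient_less[of D T ?U s t] assms(2) D \<open>transp_on D ?U\<close>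
          \<open>\<not> T s t\<close> by (simp add: T_update_mono T_update_new_edge)
      then show ?thesis using IH \<open>c1 \<le> Suc c0\<close> p by simp
    next
      case False
      obtain ps' where "ps = (t, s) # ps'"
        using ngdf_inv_reverse_next[of \<delta>, OF sym inv \<open>\<not> T s t\<close> False] .
      then have "reverse_pending ?U ps"
        using False T_update_reverse_iff[OF D(3,1,2)] T_update_new_edge
        unfolding reverse_pending_def by blast
      moreover have "?K ?U \<le> ?K T"
        using card_mutual_reach_quotient_le[of D T ?U] assms(2) D \<open>transp_on D ?U\<close>
        by (simp add: T_update_mono)
      ultimately show ?thesis using IH \<open>c1 \<le> Suc c0\<close> p False by (simp add: reverse_pending_def)
    qed
  qed
qed

lemma gpath_iff_successively:
  "gpath A p \<longleftrightarrow> p \<noteq> [] \<and> successively (\<lambda>x y. (x, y) \<in> A) p"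
  unfolding gpath_def successively_conv_nth by blast

lemma gpath_append:
  assumes "gpath A p" and "gpath A (last p # p')"
  shows "gpath A (p @ p')"
  using assms unfolding gpath_iff_successively
  by (cases p') (auto simp: successively_append_iff)

lemma EH_le_enat_iff:
  "EH F E EEX u v \<le> enat K \<longleftrightarrow>
    (\<exists>p. gpath (all_edges E EEX) p \<and> hd p = u \<and> last p = v \<and> (\<forall>x\<in>set p. F x \<le> K))"
proof
  assume "EH F E EEX u v \<le> enat K"
  then have "EH F E EEX u v < enat (Suc K)" by (simp add: le_less_trans)
  then obtain p where p: "gpath (all_edges E EEX) p" "hd p = u" "last p = v"
    and "enat (Max (F ` set p)) < enat (Suc K)"
    unfolding EH_def INF_less_iff by blast
  then have "\<forall>x\<in>set p. F x \<le> K" using p(1) by (simp add: gpath_def less_Suc_eq_le)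
  with p show "\<exists>p. gpath (all_edges E EEX) p \<and> hd p = u \<and> last p = v \<and> (\<forall>x\<in>set p. F x \<le> K)"
    by blast
next
  assume "\<exists>p. gpath (all_edges E EEX) p \<and> hd p = u \<and> last p = v \<and> (\<forall>x\<in>set p. F x \<le> K)"
  then obtain p where p: "gpath (all_edges E EEX) p" "hd p = u" "last p = v"
    and low: "\<forall>x\<in>set p. F x \<le> K" by blast
  then have "EH F E EEX u v \<le> enat (Max (F ` set p))" unfolding EH_def by (intro INF_lower) simp
  also have "\<dots> \<le> enat K" using p(1) low by (simp add: gpath_def)
  finally show "EH F E EEX u v \<le> enat K" .
qed

lemma EH_self_le: "EH F E EEX u u \<le> enat (F u)"
  unfolding EH_le_enat_iff by (rule exI[of _ "[u]"]) (simp add: gpath_def)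

lemma EH_le_enat_trans:
  assumes "EH F E EEX u v \<le> enat K" and "EH F E EEX v w \<le> enat K"
  shows "EH F E EEX u w \<le> enat K"
proof -
  obtain p where p: "gpath (all_edges E EEX) p" "hd p = u" "last p = v" "\<forall>x\<in>set p. F x \<le> K"
    using assms(1) unfolding EH_le_enat_iff by blast
  obtain p' where p': "gpath (all_edges E EEX) (v # p')" "last (v # p') = w"
      "\<forall>x\<in>set (v # p'). F x \<le> K"
    using assms(2) unfolding EH_le_enat_iff by (metis gpath_def list.collapse)
  have "gpath (all_edges E EEX) (p @ p')" using p p' by (simp add: gpath_append)
  moreover have "hd (p @ p') = u" "last (p @ p') = w" using p p' by (auto simp: gpath_def)
  ultimately show ?thesis using p(4) p'(3) unfolding EH_le_enat_iff by fastforce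
qed

theorem theorem5p4:
  fixes X :: "('d::finite) point set" and q :: "'d point"
    and \<delta> :: "'d point \<Rightarrow> 'd point \<Rightarrow> real"
    and N :: "nat \<Rightarrow> 'd point"
    and E :: "('d point \<times> 'd point) set" and EEX :: "('d point \<times> 'd point \<times> enat) set"
    and Nq Kh M :: nat
    and ec :: "(nat \<times> nat) list"
    and T' :: "nat \<Rightarrow> nat \<Rightarrow> bool" and EEX' :: "('d point \<times> 'd point \<times> enat) set" and c :: nat
  assumes "finite X"
    and "\<And>x y. \<delta> x y = \<delta> y x"
    and "nn_enum \<delta> X q N"
    and "E \<subseteq> X \<times> X" and "\<forall>(u, v, h) \<in> EEX. u \<in> X \<and> v \<in> X" and "finite EEX"
    and "1 \<le> Nq" and "Nq \<le> card X" and "Nq \<le> Kh"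
    and "distinct ec"
    and "set ec = {(i, j). 1 \<le> i \<and> i \<le> Nq \<and> 1 \<le> j \<and> j \<le> Nq \<and>
                   \<not> EH (rank N X) E EEX (N i) (N j) \<le> enat Kh}"
    and "sorted_wrt (ec_le \<delta> N) ec"
    and "ngdf_run N (\<lambda>i j. EH (rank N X) E EEX (N i) (N j)) M ec
           (\<lambda>i j. EH (rank N X) E EEX (N i) (N j) \<le> enat Kh, EEX, 0) (T', EEX', c)"
  shows "c \<le> 2 * (Nq - 1)"
proof -
  define D where "D = {1..Nq}"
  define T0 where "T0 = (\<lambda>i j. EH (rank N X) E EEX (N i) (N j) \<le> enat Kh)"
  have "reflp_on D T0"
  proof (rule reflp_onI)
    fix i assume "i \<in> D"
    have "bij_betw N {1..card X} X" using assms(3) by (simp add: nn_enum_def)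
    then have "rank N X (N i) = i"
      using \<open>i \<in> D\<close> assms(8) unfolding rank_def D_def by (simp add: bij_betw_def the_inv_into_f_f)
    then show "T0 i i"
      using EH_self_le[of "rank N X" E EEX "N i"] \<open>i \<in> D\<close> assms(9)
      unfolding T0_def D_def by (simp add: order_trans)
  qed
  moreover have "transp_on D T0" unfolding T0_def by (auto intro: transp_onI EH_le_enat_trans)
  ultimately have "ngdf_inv \<delta> N D T0 ec"
    using assms(10-12) unfolding ngdf_inv_def D_def T0_def by auto
  moreover have "finite D" by (simp add: D_def)
  ultimately have "c + 2 * card (D // mutual_reach D T') \<le> 2 * card (D // mutual_reach D T0)"
    using ngdf_run_potential_mono[of \<delta>, OF assms(2)] assms(13) unfolding T0_def
    by (metis add_0 add_leD1)
  moreover have "card (D // mutual_reach D T0) \<le> Nq" using card_quotient_le[of D] by (simp add: D_def)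
  moreover have "0 < card (D // mutual_reach D T')" using assms(7) by (simp add: card_quotient_pos D_def)
  ultimately show ?thesis by linarith
qed

end
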